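(* Let $G$ be a finite group. If there exists $g\in G$ whose order is divisible by at least three distinct primes, then $\mathcal{I}(G)=\emptyset$ and the diameter of $\Gamma(G)$ is at most $2$.
   Context: For a finite group $G$, let $\widetilde{\Gamma}(G)$ be the graph with vertex set $G$ in which two distinct elements $x,y$ are adjacent if and only if $|\langle x,y\rangle|$ is divisible by at least three distinct primes. $\mathcal{I}(G)$ denotes the set of isolated vertices of $\widetilde{\Gamma}(G)$, and $\Gamma(G)$ is the subgraph of $\widetilde{\Gamma}(G)$ induced on $G\setminus\mathcal{I}(G)$. *)

theory Defs
  imports "HOL-Algebra.Algebra" "HOL-Computational_Algebra.Primes"
begin

definition tGamma_adj :: "('a, 'b) monoid_scheme \<Rightarrow> 'a \<Rightarrow> 'a \<Rightarrow> bool" where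
  "tGamma_adj G x y \<longleftrightarrow> x \<in> carrier G \<and> y \<in> carrier G \<and> x \<noteq> y \<and>
     card {p::nat. Factorial_Ring.prime p \<and> p dvd card (generate G {x, y})} \<ge> 3"

definition isolated_vertices :: "('a, 'b) monoid_scheme \<Rightarrow> 'a set" where
  "isolated_vertices G = {x \<in> carrier G. \<forall>y \<in> carrier G. \<not> tGamma_adj G x y}"

text \<open>Vertex set of Gamma(G): the induced subgraph of tilde-Gamma(G) on G minus I(G).\<close>
definition Gamma_vertices :: "('a, 'b) monoid_scheme \<Rightarrow> 'a set" where
  "Gamma_vertices G = carrier G - isolated_vertices G"

definition Gamma_diam_le_2 :: "('a, 'b) monoid_scheme \<Rightarrow> bool" where
  "Gamma_diam_le_2 G \<longleftrightarrow> (\<forall>x \<in> Gamma_vertices G. \<forall>y \<in> Gamma_vertices G.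
      x = y \<or> tGamma_adj G x y \<or>
      (\<exists>z \<in> Gamma_vertices G. tGamma_adj G x z \<and> tGamma_adj G z y))"

end

theory Submission
  imports Defs
begin

text \<open>If the order of g has at least three prime divisors, then so does the order of every
  subgroup containing g, because ord g divides it by Lagrange. Hence g is adjacent to every
  other element of G, and such elements exist since g \<noteq> \<one>. A vertex adjacent to all
  others leaves no vertex isolated and joins any two vertices by a path of length at most 2.\<close>

lemma tGamma_adj_sym: "tGamma_adj G x y \<Longrightarrow> tGamma_adj G y x"
  unfolding tGamma_adj_def by (auto simp: insert_commute)

definition dominating_vertex :: "('a, 'b) monoid_scheme \<Rightarrow> 'a \<Rightarrow> bool" where
  "dominating_vertex G g \<longleftrightarrow>
     g \<in> carrier G \<and> (\<forall>x \<in> carrier G. x \<noteq> g \<longrightarrow> tGamma_adj G x g)"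

lemma isolated_vertices_empty_if_dominating_vertex:
  assumes "dominating_vertex G g" and "x\<^sub>0 \<in> carrier G" and "x\<^sub>0 \<noteq> g"
  shows "isolated_vertices G = {}"
proof -
  have g: "g \<in> carrier G" and to_g: "\<And>x. x \<in> carrier G \<Longrightarrow> x \<noteq> g \<Longrightarrow> tGamma_adj G x g"
    using assms(1) unfolding dominating_vertex_def by auto
  have "\<exists>y \<in> carrier G. tGamma_adj G x y" if "x \<in> carrier G" for x
  proof (cases "x = g")
    case True
    then show ?thesis
      using tGamma_adj_sym[OF to_g[OF assms(2,3)]] assms(2) by blast
  next
    case False
    then show ?thesis
      using to_g[OF that] g by blast
  qed
  then show ?thesis
    unfolding isolated_vertices_def by blast
qed

lemma Gamma_diam_le_2_if_dominating_vertex: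
  assumes "dominating_vertex G g"
  shows "Gamma_diam_le_2 G"
  unfolding Gamma_diam_le_2_def
proof (intro ballI)
  fix x y assume "x \<in> Gamma_vertices G" and "y \<in> Gamma_vertices G"
  then have x: "x \<in> carrier G" and y: "y \<in> carrier G"
    unfolding Gamma_vertices_def by auto
  have g: "g \<in> carrier G" and to_g: "\<And>z. z \<in> carrier G \<Longrightarrow> z \<noteq> g \<Longrightarrow> tGamma_adj G z g"
    using assms unfolding dominating_vertex_def by auto
  then have from_g: "\<And>z. z \<in> carrier G \<Longrightarrow> z \<noteq> g \<Longrightarrow> tGamma_adj G g z"
    by (simp add: tGamma_adj_sym)
  consider "x = y" | "x = g" | "y = g" | "x \<noteq> g" "y \<noteq> g"
    by blast
  then show "x = y \<or> tGamma_adj G x y \<or> (\<exists>z \<in> Gamma_vertices G. tGamma_adj G x z \<and> tGamma_adj G z y)"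
  proof cases
    case 4
    then have "tGamma_adj G x g" and "tGamma_adj G g y"
      using x y to_g from_g by auto
    moreover have "g \<in> Gamma_vertices G"
      using g \<open>tGamma_adj G g y\<close> y unfolding Gamma_vertices_def isolated_vertices_def by blast
    ultimately show ?thesis by blast
  qed (use x y to_g from_g in auto)
qed

lemma (in group) card_subgroup_dvd_card_subgroup:
  assumes "subgroup H G" and "subgroup K G" and "H \<subseteq> K"
  shows "card H dvd card K"
proof -
  interpret K: group "G\<lparr>carrier := K\<rparr>"
    using assms(2) by (rule subgroup.subgroup_is_group) (rule is_group)
  have "subgroup H (G\<lparr>carrier := K\<rparr>)"
    using assms by (simp add: subgroup_incl)
  then have "card (rcosets\<^bsub>G\<lparr>carrier := K\<rparr>\<^esub> H) * card H = card K"
    using K.lagrange by (simp add: order_def)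
  then show ?thesis
    by (metis dvd_triv_right)
qed

lemma (in group) ord_dvd_card_generate:
  assumes "g \<in> A" and "A \<subseteq> carrier G"
  shows "ord g dvd card (generate G A)"
proof -
  have "ord g = card (generate G {g})"
    using assms by (intro generate_pow_card) auto
  moreover have "generate G {g} \<subseteq> generate G A"
    using assms by (intro mono_generate) auto
  ultimately show ?thesis
    using assms by (metis card_subgroup_dvd_card_subgroup generate_is_subgroup
        empty_subsetI insert_subset subset_trans)
qed

lemma card_prime_divisors_mono:
  fixes a b :: nat
  assumes "a dvd b" and "b \<noteq> 0"
  shows "card {p. Factorial_Ring.prime p \<and> p dvd a} \<le> card {p. Factorial_Ring.prime p \<and> p dvd b}"
proof -
  have "a \<noteq> 0"
    using assms by auto
  then show ?thesis
    using assms by (simp add: prime_factors_dvd[symmetric] card_mono dvd_prime_factors)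
qed

lemma (in group) dominating_vertex_if_ord_has_three_prime_divisors:
  assumes "finite (carrier G)" and "g \<in> carrier G"
    and three: "card {p::nat. Factorial_Ring.prime p \<and> p dvd ord g} \<ge> 3"
  shows "dominating_vertex G g"
  unfolding dominating_vertex_def
proof (intro conjI ballI impI)
  fix x assume "x \<in> carrier G" and "x \<noteq> g"
  let ?H = "generate G {x, g}"
  have "?H \<subseteq> carrier G"
    using \<open>x \<in> carrier G\<close> assms(2) by (intro generate_incl) auto
  then have "card ?H \<noteq> 0"
    using assms(1) generate.one by (metis card_0_eq empty_iff finite_subset)
  moreover have "ord g dvd card ?H"
    using \<open>x \<in> carrier G\<close> assms(2) by (intro ord_dvd_card_generate) auto
  ultimately have "card {p::nat. Factorial_Ring.prime p \<and> p dvd card ?H} \<ge> 3"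
    using card_prime_divisors_mono three le_trans by blast
  then show "tGamma_adj G x g"
    unfolding tGamma_adj_def using \<open>x \<in> carrier G\<close> \<open>x \<noteq> g\<close> assms(2) by blast
qed (fact assms(2))

theorem lemma2p5:
  fixes G :: "('a, 'b) monoid_scheme"
  assumes "group G" and "finite (carrier G)"
    and "\<exists>g \<in> carrier G. card {p::nat. Factorial_Ring.prime p \<and> p dvd group.ord G g} \<ge> 3"
  shows "isolated_vertices G = {} \<and> Gamma_diam_le_2 G"
proof -
  interpret group G by fact
  obtain g where g: "g \<in> carrier G"
    and three: "card {p::nat. Factorial_Ring.prime p \<and> p dvd ord g} \<ge> 3"
    using assms(3) by blast
  have dominating: "dominating_vertex G g"
    using assms(2) g three by (rule dominating_vertex_if_ord_has_three_prime_divisors)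
  have "g \<noteq> \<one>\<^bsub>G\<^esub>"
  proof
    assume "g = \<one>\<^bsub>G\<^esub>"
    then have "{p::nat. Factorial_Ring.prime p \<and> p dvd ord g} = {}"
      by auto
    with three show False
      by simp
  qed
  then show ?thesis
    using isolated_vertices_empty_if_dominating_vertex[OF dominating one_closed]
      Gamma_diam_le_2_if_dominating_vertex[OF dominating] by simp
qed

end
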